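(* Let $(A,B)$ be a weakly non-singular pair in $\mathrm{Sp}(n,1)$ with associated points $p=(p_1,\dots,p_{2n})$. Suppose $\mathbf p=(\mathbf p_1,\dots,\mathbf p_{2n})$ is a lift of $p$ whose Gram matrix $G(\mathbf p)=(\langle\mathbf p_i,\mathbf p_j\rangle)$ is normalized, and let $\mathbf p'=(\mathbf p_1\lambda_1,\dots,\mathbf p_{2n}\lambda_{2n})$, $\lambda_i\in\mathbb H\setminus\{0\}$, be another lift of $p$ whose Gram matrix $G(\mathbf p')$ is also normalized. Then $\lambda_1=\lambda_2=\dots=\lambda_{2n}$ and $\lambda_1\in\mathrm{Sp}(1)$ (i.e. $|\lambda_1|=1$).
   Context: $\mathbb H^{n,1}$: right $\mathbb H$-vector space $\mathbb H^{n+1}$ with Hermitian form $\langle\mathbf z,\mathbf w\rangle=\mathbf w^*H\mathbf z=\bar w_{n+1}z_1+\bar w_2z_2+\dots+\bar w_nz_n+\bar w_1z_{n+1}$ (so $\langle\mathbf z\lambda,\mathbf w\mu\rangle=\bar\mu\langle\mathbf z,\mathbf w\rangle\lambda$); $\mathrm{Sp}(n,1)$ preserves it. A loxodromic $A$ (exactly two fixed points on the boundary $\partial\mathbf H^n_{\mathbb H}$ = projectivized null vectors, no real eigenvalue) has null eigenvectors $\mathbf a_A,\mathbf r_A$ (attracting/repelling fixed points $a_A,r_A$) and positive eigenvectors $\mathbf x_{j,A}$, $1\le j\le n-1$, spanning the eigenspaces of the remaining right-eigenvalue classes (points $x_{j,A}$). A weakly non-singular pair is a pair of regular loxodromics without common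 fixed point satisfying a flag genericity condition which guarantees, after reindexing, that for $1\le k\le n-2$: $\langle\mathbf x_{k,A},\mathbf a_B\rangle,\langle\mathbf x_{k,B},\mathbf a_A\rangle,\langle\mathbf r_A,\mathbf x_{k,B}\rangle,\langle\mathbf r_B,\mathbf x_{k,A}\rangle\ne0$. Associated points: $p_1=a_A,p_2=r_A,p_3=a_B,p_4=r_B$, $p_j=x_{j-4,A}$ ($5\le j\le n+2$), $p_k=x_{k-(n+2),B}$ ($n+3\le k\le 2n$). The Gram matrix $(g_{ij})$, $g_{ij}=\langle\mathbf p_i,\mathbf p_j\rangle$, is normalized if $g_{12}=g_{13}=g_{14}=1$, $|g_{23}|=1$, $g_{1k}=1$ for $n+3\le k\le 2n$, and $g_{3j}=1$ for $5\le j\le n+2$ (equivalently $\langle\mathbf a_A,\mathbf r_A\rangle=\langle\mathbf a_A,\mathbf a_B\rangle=\langle\mathbf a_A,\mathbf r_B\rangle=\langle\mathbf a_A,\mathbf x_{k,B}\rangle=\langle\mathbf a_B,\mathbf x_{k,A}\rangle=1$, $|\langle\mathbf a_B,\mathbf r_A\rangle|=1$). *)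

theory Defs
  imports Main "HOL-Analysis.Analysis"
begin

datatype quat = Quat (qr: real) (qi: real) (qj: real) (qk: real)

lemma quat_eqI: "qr x = qr y \<Longrightarrow> qi x = qi y \<Longrightarrow> qj x = qj y \<Longrightarrow> qk x = qk y \<Longrightarrow> x = y"
  by (cases x, cases y) simp

instantiation quat :: ring_1
begin
definition "0 = Quat 0 0 0 0"
definition "1 = Quat 1 0 0 0"
definition "x + y = Quat (qr x + qr y) (qi x + qi y) (qj x + qj y) (qk x + qk y)"
definition "x - y = Quat (qr x - qr y) (qi x - qi y) (qj x - qj y) (qk x - qk y)"
definition "- x = Quat (- qr x) (- qi x) (- qj x) (- qk x)"
definition "x * y = Quat
   (qr x * qr y - qi x * qi y - qj x * qj y - qk x * qk y)
   (qr x * qi y + qi x * qr y + qj x * qk y - qk x * qj y)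
   (qr x * qj y - qi x * qk y + qj x * qr y + qk x * qi y)
   (qr x * qk y + qi x * qj y - qj x * qi y + qk x * qr y)"
instance
  by standard (auto intro!: quat_eqI simp: zero_quat_def one_quat_def plus_quat_def
      minus_quat_def uminus_quat_def times_quat_def algebra_simps)
end

definition qcnj :: "quat \<Rightarrow> quat" where
  "qcnj x = Quat (qr x) (- qi x) (- qj x) (- qk x)"

definition qabs :: "quat \<Rightarrow> real" where
  "qabs x = sqrt ((qr x)\<^sup>2 + (qi x)\<^sup>2 + (qj x)\<^sup>2 + (qk x)\<^sup>2)"

definition qreal :: "quat \<Rightarrow> bool" where
  "qreal x \<longleftrightarrow> qi x = 0 \<and> qj x = 0 \<and> qk x = 0"

text \<open>Similarity class of a quaternion: all \<open>q \<mu> q\<^sup>-\<^sup>1\<close>, i.e. all \<open>\<nu>\<close> with \<open>\<nu> q = q \<mu>\<close>, \<open>q \<noteq> 0\<close>.\<close>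
definition qclass :: "quat \<Rightarrow> quat set" where
  "qclass \<mu> = {\<nu>. \<exists>q. q \<noteq> 0 \<and> \<nu> * q = q * \<mu>}"

text \<open>Vectors of \<open>\<bbbH>\<^sup>n\<^sup>+\<^sup>1\<close> are functions \<open>nat \<Rightarrow> quat\<close> supported on the coordinates \<open>1..n+1\<close>;
  matrices are functions \<open>nat \<Rightarrow> nat \<Rightarrow> quat\<close> (only entries in \<open>{1..n+1}\<^sup>2\<close> matter).\<close>
type_synonym qvec = "nat \<Rightarrow> quat"
type_synonym qmat = "nat \<Rightarrow> nat \<Rightarrow> quat"

definition qvecs :: "nat \<Rightarrow> qvec set" where
  "qvecs n = {z. \<forall>i. i \<notin> {1..n+1} \<longrightarrow> z i = 0}"

definition rmult :: "qvec \<Rightarrow> quat \<Rightarrow> qvec" where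
  "rmult z l = (\<lambda>i. z i * l)"

definition mat_app :: "nat \<Rightarrow> qmat \<Rightarrow> qvec \<Rightarrow> qvec" where
  "mat_app n M z = (\<lambda>i. if i \<in> {1..n+1} then (\<Sum>j=1..n+1. M i j * z j) else 0)"

definition hform :: "nat \<Rightarrow> qvec \<Rightarrow> qvec \<Rightarrow> quat" where
  "hform n z w = qcnj (w (n+1)) * z 1 + (\<Sum>i=2..n. qcnj (w i) * z i) + qcnj (w 1) * z (n+1)"

definition in_Sp :: "nat \<Rightarrow> qmat \<Rightarrow> bool" where
  "in_Sp n A \<longleftrightarrow> bij_betw (mat_app n A) (qvecs n) (qvecs n) \<and>
     (\<forall>z\<in>qvecs n. \<forall>w\<in>qvecs n. hform n (mat_app n A z) (mat_app n A w) = hform n z w)"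

definition same_pt :: "nat \<Rightarrow> qvec \<Rightarrow> qvec \<Rightarrow> bool" where
  "same_pt n v w \<longleftrightarrow> v \<in> qvecs n \<and> v \<noteq> (\<lambda>_. 0) \<and> (\<exists>l. l \<noteq> 0 \<and> w = rmult v l)"

definition reig :: "nat \<Rightarrow> qmat \<Rightarrow> qvec \<Rightarrow> quat \<Rightarrow> bool" where
  "reig n A v \<mu> \<longleftrightarrow> v \<in> qvecs n \<and> v \<noteq> (\<lambda>_. 0) \<and> mat_app n A v = rmult v \<mu>"

definition null_vec :: "nat \<Rightarrow> qvec \<Rightarrow> bool" where
  "null_vec n v \<longleftrightarrow> v \<in> qvecs n \<and> v \<noteq> (\<lambda>_. 0) \<and> hform n v v = 0"

definition pos_vec :: "nat \<Rightarrow> qvec \<Rightarrow> bool" where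
  "pos_vec n v \<longleftrightarrow> v \<in> qvecs n \<and> qr (hform n v v) > 0"

text \<open>Loxodromic: exactly two fixed points on the boundary (projectivised null eigenvectors)
  and no real right eigenvalue.\<close>
definition loxodromic :: "nat \<Rightarrow> qmat \<Rightarrow> bool" where
  "loxodromic n A \<longleftrightarrow> in_Sp n A \<and>
     (\<exists>a r \<mu> \<nu>. null_vec n a \<and> reig n A a \<mu> \<and> null_vec n r \<and> reig n A r \<nu> \<and>
        \<not> same_pt n a r \<and>
        (\<forall>v \<kappa>. null_vec n v \<and> reig n A v \<kappa> \<longrightarrow> same_pt n a v \<or> same_pt n r v)) \<and>
     \<not> (\<exists>v \<mu>. reig n A v \<mu> \<and> qreal \<mu>)"

definition regular_lox :: "nat \<Rightarrow> qmat \<Rightarrow> bool" where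
  "regular_lox n A \<longleftrightarrow> loxodromic n A \<and>
     card {qclass \<mu> | \<mu>. \<exists>v. reig n A v \<mu>} = n + 1"

definition lox_data :: "nat \<Rightarrow> qmat \<Rightarrow> qvec \<Rightarrow> qvec \<Rightarrow> (nat \<Rightarrow> qvec) \<Rightarrow> bool" where
  "lox_data n A a r x \<longleftrightarrow> regular_lox n A \<and>
     null_vec n a \<and> (\<exists>\<mu>. reig n A a \<mu> \<and> qabs \<mu> > 1) \<and>
     null_vec n r \<and> (\<exists>\<mu>. reig n A r \<mu> \<and> qabs \<mu> < 1) \<and>
     (\<forall>j\<in>{1..n-1}. pos_vec n (x j) \<and> (\<exists>\<mu>. reig n A (x j) \<mu>)) \<and>
     (\<forall>j\<in>{1..n-1}. \<forall>k\<in>{1..n-1}. \<forall>\<mu> \<nu>. j \<noteq> k \<and> reig n A (x j) \<mu> \<and> reig n A (x k) \<nu>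
         \<longrightarrow> qclass \<mu> \<noteq> qclass \<nu>)"

text \<open>Weakly non-singular pair (with eigen-data, indexed after the reindexing guaranteed by the
  flag genericity condition): regular loxodromics without common boundary fixed point, and the
  listed inner products are nonzero for \<open>1 \<le> k \<le> n-2\<close>.\<close>
definition weakly_nonsingular ::
  "nat \<Rightarrow> qmat \<Rightarrow> qmat \<Rightarrow> qvec \<Rightarrow> qvec \<Rightarrow> (nat \<Rightarrow> qvec) \<Rightarrow> qvec \<Rightarrow> qvec \<Rightarrow> (nat \<Rightarrow> qvec) \<Rightarrow> bool"
  where
  "weakly_nonsingular n A B aA rA xA aB rB xB \<longleftrightarrow>
     lox_data n A aA rA xA \<and> lox_data n B aB rB xB \<and>
     \<not> same_pt n aA aB \<and> \<not> same_pt n aA rB \<and> \<not> same_pt n rA aB \<and> \<not> same_pt n rA rB \<and>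
     (\<forall>k\<in>{1..n-2}. hform n (xA k) aB \<noteq> 0 \<and> hform n (xB k) aA \<noteq> 0 \<and>
                    hform n rA (xB k) \<noteq> 0 \<and> hform n rB (xA k) \<noteq> 0)"

definition assoc_vec ::
  "nat \<Rightarrow> qvec \<Rightarrow> qvec \<Rightarrow> (nat \<Rightarrow> qvec) \<Rightarrow> qvec \<Rightarrow> qvec \<Rightarrow> (nat \<Rightarrow> qvec) \<Rightarrow> nat \<Rightarrow> qvec" where
  "assoc_vec n aA rA xA aB rB xB i =
     (if i = 1 then aA else if i = 2 then rA else if i = 3 then aB else if i = 4 then rB
      else if i \<le> n + 2 then xA (i - 4) else xB (i - (n + 2)))"

definition is_lift :: "nat \<Rightarrow> (nat \<Rightarrow> qvec) \<Rightarrow> (nat \<Rightarrow> qvec) \<Rightarrow> bool" where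
  "is_lift n p P \<longleftrightarrow> (\<forall>i\<in>{1..2*n}. same_pt n (p i) (P i))"

definition gram :: "nat \<Rightarrow> (nat \<Rightarrow> qvec) \<Rightarrow> nat \<Rightarrow> nat \<Rightarrow> quat" where
  "gram n P i j = hform n (P i) (P j)"

definition normalized_gram :: "nat \<Rightarrow> (nat \<Rightarrow> qvec) \<Rightarrow> bool" where
  "normalized_gram n P \<longleftrightarrow>
     gram n P 1 2 = 1 \<and> gram n P 1 3 = 1 \<and> gram n P 1 4 = 1 \<and> qabs (gram n P 2 3) = 1 \<and>
     (\<forall>k\<in>{n+3..2*n}. gram n P 1 k = 1) \<and> (\<forall>j\<in>{5..n+2}. gram n P 3 j = 1)"

end

theory Submission
  imports Defs
begin

text \<open>Rescaling the lift by \<open>\<lambda>\<^sub>i\<close> turns the Gram entry \<open>g\<^sub>i\<^sub>j\<close> into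
  \<open>\<lambda>\<^sub>j\<^sup>* g\<^sub>i\<^sub>j \<lambda>\<^sub>i\<close>. Each normalization condition \<open>g\<^sub>i\<^sub>j = 1\<close> holding for both lifts therefore
  says \<open>\<lambda>\<^sub>j\<^sup>* \<lambda>\<^sub>i = 1\<close>, i.e. \<open>\<lambda>\<^sub>j\<^sup>* = \<lambda>\<^sub>i\<^sup>-\<^sup>1\<close>. The conditions in the first row identify
  \<open>\<lambda>\<^sub>2, \<lambda>\<^sub>3, \<lambda>\<^sub>4\<close> and all \<open>\<lambda>\<^sub>k\<close>, \<open>k \<ge> n+3\<close>; then \<open>|g\<^sub>2\<^sub>3| = 1\<close> gives \<open>|\<lambda>\<^sub>2|\<^sup>2 = 1\<close>, so
  \<open>\<lambda>\<^sub>2\<^sup>* = \<lambda>\<^sub>2\<^sup>-\<^sup>1\<close>, which yields \<open>\<lambda>\<^sub>1 = \<lambda>\<^sub>2\<close> and, via the third row, \<open>\<lambda>\<^sub>j = \<lambda>\<^sub>2\<close> for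
  \<open>5 \<le> j \<le> n+2\<close>. Only the two normalization hypotheses are used: weak non-singularity
  is what makes normalized lifts exist, and \<open>\<lambda>\<^sub>i \<noteq> 0\<close> follows from the equations.\<close>

lemma quat_sum_squares_pos:
  assumes "x \<noteq> 0" shows "(qr x)\<^sup>2 + (qi x)\<^sup>2 + (qj x)\<^sup>2 + (qk x)\<^sup>2 > 0"
proof -
  have "qr x \<noteq> 0 \<or> qi x \<noteq> 0 \<or> qj x \<noteq> 0 \<or> qk x \<noteq> 0"
    using assms by (auto intro: quat_eqI simp: zero_quat_def)
  then show ?thesis
    by (smt (verit) power2_less_eq_zero_iff zero_le_power2)
qed

instantiation quat :: division_ring
begin

definition inverse_quat :: "quat \<Rightarrow> quat" where
  "inverse x = (let s = (qr x)\<^sup>2 + (qi x)\<^sup>2 + (qj x)\<^sup>2 + (qk x)\<^sup>2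
                in Quat (qr x / s) (- qi x / s) (- qj x / s) (- qk x / s))"

definition "x div y = x * inverse y" for x y :: quat

instance
proof
  fix x :: quat
  assume "x \<noteq> 0"
  then show "inverse x * x = 1" "x * inverse x = 1"
    using quat_sum_squares_pos[of x]
    by (intro quat_eqI; simp add: inverse_quat_def times_quat_def one_quat_def Let_def
        power2_eq_square add_divide_distrib[symmetric] diff_divide_distrib[symmetric]
        algebra_simps)+
qed (simp_all add: divide_quat_def inverse_quat_def zero_quat_def)

end

lemma qcnj_qcnj [simp]: "qcnj (qcnj x) = x"
  by (rule quat_eqI) (simp_all add: qcnj_def)

lemma qcnj_mult: "qcnj (x * y) = qcnj y * qcnj x"
  by (rule quat_eqI) (simp_all add: qcnj_def times_quat_def algebra_simps)

lemma qabs_nonneg: "qabs x \<ge> 0"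
  by (simp add: qabs_def)

lemma qabs_qcnj [simp]: "qabs (qcnj x) = qabs x"
  by (simp add: qabs_def qcnj_def)

lemma qabs_mult: "qabs (x * y) = qabs x * qabs y"
  unfolding qabs_def times_quat_def
  by (simp add: real_sqrt_mult[symmetric] power2_eq_square algebra_simps)

lemma qcnj_mult_self_eq_one:
  assumes "qabs x = 1" shows "qcnj x * x = 1"
proof -
  have "(qr x)\<^sup>2 + (qi x)\<^sup>2 + (qj x)\<^sup>2 + (qk x)\<^sup>2 = 1"
    using assms by (simp add: qabs_def)
  then show ?thesis
    by (intro quat_eqI) (simp_all add: qcnj_def times_quat_def one_quat_def power2_eq_square
        algebra_simps)
qed

lemma qcnj_mult_eq_one_cancel:
  assumes "qcnj a * c = 1" and "qcnj b * c = 1" shows "a = b"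
proof -
  have "qcnj a = qcnj b"
    using inverse_unique[OF assms(1)] inverse_unique[OF assms(2)] by (metis inverse_inverse_eq)
  then show ?thesis
    by (metis qcnj_qcnj)
qed

lemma hform_rmult: "hform n (rmult z a) (rmult w b) = qcnj b * hform n z w * a"
  unfolding hform_def rmult_def
  by (simp add: qcnj_mult sum_distrib_left sum_distrib_right mult.assoc distrib_left distrib_right)

lemma gram_rmult: "gram n (\<lambda>i. rmult (P i) (l i)) i j = qcnj (l j) * gram n P i j * l i"
  by (simp add: gram_def hform_rmult)

lemma normalized_gram_rmult_products:
  assumes "normalized_gram n P" and "normalized_gram n (\<lambda>i. rmult (P i) (l i))"
  shows "k \<in> {2, 3, 4} \<union> {n+3..2*n} \<Longrightarrow> qcnj (l k) * l 1 = 1"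
    and "j \<in> {5..n+2} \<Longrightarrow> qcnj (l j) * l 3 = 1"
    and "qabs (l 3) * qabs (l 2) = 1"
  using assms by (auto simp: normalized_gram_def gram_rmult qabs_mult)

lemma normalizing_factors_eq:
  fixes l :: "nat \<Rightarrow> quat"
  assumes first_row: "\<And>k. k \<in> K \<Longrightarrow> qcnj (l k) * l 1 = 1"
    and third_row: "\<And>j. j \<in> J \<Longrightarrow> qcnj (l j) * l 3 = 1"
    and modulus: "qabs (l 3) * qabs (l 2) = 1"
    and "2 \<in> K" and "3 \<in> K"
  shows "\<forall>i \<in> insert 1 (K \<union> J). l i = l 1" and "qabs (l 1) = 1"
proof -
  have first_row_eq: "l k = l 2" if "k \<in> K" for k
    using qcnj_mult_eq_one_cancel first_row that \<open>2 \<in> K\<close> by blast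
  have "(qabs (l 2))\<^sup>2 = 1"
    using modulus first_row_eq[OF \<open>3 \<in> K\<close>] by (simp add: power2_eq_square)
  then have "qabs (l 2) = 1"
    using power2_eq_iff_nonneg[OF qabs_nonneg zero_le_one, of "l 2"] by simp
  then have unit: "qcnj (l 2) * l 2 = 1"
    by (rule qcnj_mult_self_eq_one)
  have "l 1 = l 2"
  proof -
    have "qcnj (l 2) * l 1 = qcnj (l 2) * l 2"
      using first_row[OF \<open>2 \<in> K\<close>] unit by simp
    moreover have "qcnj (l 2) \<noteq> 0"
      using unit by auto
    ultimately show ?thesis
      by simp
  qed
  have third_row_eq: "l j = l 2" if "j \<in> J" for j
    by (rule qcnj_mult_eq_one_cancel[OF _ unit])
      (use third_row[OF that] first_row_eq[OF \<open>3 \<in> K\<close>] in simp)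
  show "\<forall>i \<in> insert 1 (K \<union> J). l i = l 1"
    using \<open>l 1 = l 2\<close> first_row_eq third_row_eq by (metis Un_iff insertE)
  show "qabs (l 1) = 1"
    using \<open>l 1 = l 2\<close> \<open>qabs (l 2) = 1\<close> by simp
qed

theorem mainTheorem7:
  fixes n :: nat and A B :: qmat and aA rA aB rB :: qvec and xA xB :: "nat \<Rightarrow> qvec"
    and P :: "nat \<Rightarrow> qvec" and l :: "nat \<Rightarrow> quat"
  assumes "n \<ge> 2"
    and "weakly_nonsingular n A B aA rA xA aB rB xB"
    and "is_lift n (assoc_vec n aA rA xA aB rB xB) P"
    and "normalized_gram n P"
    and "\<forall>i\<in>{1..2*n}. l i \<noteq> 0"
    and "is_lift n (assoc_vec n aA rA xA aB rB xB) (\<lambda>i. rmult (P i) (l i))"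
    and "normalized_gram n (\<lambda>i. rmult (P i) (l i))"
  shows "(\<forall>i\<in>{1..2*n}. l i = l 1) \<and> qabs (l 1) = 1"
proof -
  let ?K = "{2, 3, 4} \<union> {n+3..2*n}" and ?J = "{5..n+2}"
  have "2 \<in> ?K" and "3 \<in> ?K"
    by simp_all
  note factors = normalizing_factors_eq[OF normalized_gram_rmult_products[OF assms(4,7)] this]
  have "{1..2*n} \<subseteq> insert 1 (?K \<union> ?J)"
    by auto
  with factors show ?thesis
    by blast
qed

end
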